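(* Let $W\in\mathrm{Mat}(n,\mathbb{Z})$ be a P-admissible matrix and let $Q=(q_0,\ldots,q_n)$ be a reduced weights vector associated with $W$. Then: (a) $(\widehat W^T)^*_Q=W$; (b) if $s$ is the gcd of all entries of $\mathrm{Adj}(W)$ and $s_i$ is the gcd of the entries of the $i$-th row of $\mathrm{Adj}(W)$, then $q_0=|\det\widehat W|$, $q_i=s_i/s$ for $1\le i\le n$, and $\mathrm{lcm}(Q)=|\det W|/s$; (c) if $Q_1$ and $Q_2$ are reduced weights vectors associated with the same P-admissible matrix $W$, then $Q_1=Q_2$; (d) there exists a unique F-admissible matrix $V$ with $W=(V^0)^*_Q$ and $Q=(|V_0|,\ldots,|V_n|)$.
   Context: A weights vector is an $(n+1)$-tuple of positive integers with gcd $1$; it is reduced if $\gcd(q_i:i\neq j)=1$ for every $j$. For $V=(\mathbf{v}_0,\ldots,\mathbf{v}_n)\in\mathrm{Mat}(n,n+1;\mathbb{Z})$, $V_j$ is the determinant of $V$ with column $\mathbf{v}_j$ deleted and $V^0=(\mathbf{v}_1,\ldots,\mathbf{v}_n)$. $V$ is F-admissible if all $V_j\neq0$, $\gcd(V_0,\ldots,V_n)=1$ and $\sum_j|V_j|\mathbf{v}_j=0$. For $A\in\mathrm{GL}(n,\mathbb{Q})$, $A^*=(A^{-1})^T$. The weighted transverse of $V$ (all $V_j\ne0$) is $(V^0)^*_Q=(V^0)^*\cdot\delta\,\mathrm{diag}(1/|V_1|,\ldots,1/|V_n|)$, where $Q=(|V_0|,\ldots,|V_n|)$ and $\delta=\mathrm{lcm}(Q)$.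 A matrix $W\in\mathrm{Mat}(n,\mathbb{Z})$ is P-admissible if $W=(V^0)^*_Q$ for some F-admissible $V$ with $Q=(|V_0|,\ldots,|V_n|)$; then $Q,W,V$ are said to be associated. For $W\in\mathrm{GL}(n,\mathbb{Q})\cap\mathrm{Mat}(n,\mathbb{Z})$, $\mathrm{Adj}(W)=\det(W)W^{-1}$, $s_i$ is the gcd of the $i$-th row of $\mathrm{Adj}(W)$, and $\widehat W=\mathrm{diag}(|\det W|/s_1,\ldots,|\det W|/s_n)\cdot W^{-1}$. *)

theory Defs
  imports "Jordan_Normal_Form.Determinant" "Jordan_Normal_Form.Gauss_Jordan_Elimination"
begin

text \<open>Conventions: an n x (n+1) matrix V has columns indexed 0..n (column j is v_j);
  n x n matrices have rows/columns indexed 0..n-1 (paper's index i corresponds to i-1).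
  A weights vector (q_0,...,q_n) is a list Q of length n+1 with Q ! j = q_j.\<close>

definition ratm :: "int mat \<Rightarrow> rat mat" where
  "ratm A = map_mat rat_of_int A"

text \<open>Inverse of a square rational matrix (meaningful for invertible matrices).\<close>
definition minv :: "rat mat \<Rightarrow> rat mat" where
  "minv A = the (mat_inverse A)"

definition mstar :: "rat mat \<Rightarrow> rat mat" where
  "mstar A = transpose_mat (minv A)"

definition del_col :: "'a mat \<Rightarrow> nat \<Rightarrow> 'a mat" where
  "del_col V j = mat (dim_row V) (dim_col V - 1) (\<lambda>(i,k). V $$ (i, if k < j then k else Suc k))"

definition Vdet :: "int mat \<Rightarrow> nat \<Rightarrow> int" where
  "Vdet V j = det (del_col V j)"

definition V0 :: "int mat \<Rightarrow> int mat" where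
  "V0 V = del_col V 0"

definition F_admissible :: "nat \<Rightarrow> int mat \<Rightarrow> bool" where
  "F_admissible n V \<longleftrightarrow> V \<in> carrier_mat n (Suc n)
     \<and> (\<forall>j\<le>n. Vdet V j \<noteq> 0)
     \<and> Gcd {Vdet V j | j. j \<le> n} = 1
     \<and> (\<forall>i<n. (\<Sum>j\<le>n. \<bar>Vdet V j\<bar> * V $$ (i, j)) = 0)"

definition weights_vector :: "int list \<Rightarrow> bool" where
  "weights_vector Q \<longleftrightarrow> Q \<noteq> [] \<and> (\<forall>q\<in>set Q. q > 0) \<and> Gcd (set Q) = 1"

definition reduced :: "int list \<Rightarrow> bool" where
  "reduced Q \<longleftrightarrow> (\<forall>j<length Q. Gcd {Q ! i | i. i < length Q \<and> i \<noteq> j} = 1)"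

definition absdets :: "nat \<Rightarrow> int mat \<Rightarrow> int list" where
  "absdets n V = map (\<lambda>j. \<bar>Vdet V j\<bar>) [0..<Suc n]"

definition wtrans :: "int list \<Rightarrow> rat mat \<Rightarrow> rat mat" where
  "wtrans Q A = mstar A *
     (rat_of_int (Lcm (set Q)) \<cdot>\<^sub>m mat_diag (dim_row A) (\<lambda>i. 1 / rat_of_int (Q ! Suc i)))"

definition associated :: "nat \<Rightarrow> int list \<Rightarrow> int mat \<Rightarrow> int mat \<Rightarrow> bool" where
  "associated n Q W V \<longleftrightarrow> F_admissible n V \<and> Q = absdets n V \<and> ratm W = wtrans Q (ratm (V0 V))"

definition P_admissible :: "nat \<Rightarrow> int mat \<Rightarrow> bool" where
  "P_admissible n W \<longleftrightarrow> W \<in> carrier_mat n n \<and> (\<exists>V. associated n (absdets n V) W V)"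

definition Adj :: "int mat \<Rightarrow> int mat" where
  "Adj W = adj_mat W"

definition row_gcd :: "int mat \<Rightarrow> nat \<Rightarrow> int" where
  "row_gcd W i = Gcd {Adj W $$ (i, k) | k. k < dim_col W}"

definition What :: "int mat \<Rightarrow> rat mat" where
  "What W = mat_diag (dim_row W) (\<lambda>i. rat_of_int \<bar>det W\<bar> / rat_of_int (row_gcd W i)) * minv (ratm W)"

end

theory Submission
  imports Defs
begin

text \<open>If \<open>W = (V\<^sup>0)\<^sup>*\<^sub>Q\<close> with \<open>\<delta> = lcm Q\<close>, then \<open>W\<^sup>-\<^sup>1 = diag(q\<^sub>i/\<delta>) (V\<^sup>0)\<^sup>T\<close>, so
  \<open>Adj W = (det W/\<delta>) diag(q\<^sub>i) (V\<^sup>0)\<^sup>T\<close>. A common divisor of a column of \<open>V\<close> divides every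
  minor \<open>V\<^sub>j\<close> that keeps this column, i.e. all but one of the weights; as \<open>Q\<close> is reduced,
  every column of \<open>V\<close> is primitive, and so is \<open>(q\<^sub>1,\<dots>,q\<^sub>n)\<close>. Hence \<open>m = det W/\<delta>\<close> is an
  integer, \<open>s\<^sub>i = |m| q\<^sub>i\<close> and \<open>s = |m|\<close>, which gives \<open>What W = (V\<^sup>0)\<^sup>T\<close>. Thus \<open>W\<close> determines
  \<open>V\<^sup>0\<close> and \<open>Q\<close>, and the column \<open>v\<^sub>0\<close> is recovered from \<open>\<Sum>\<^sub>j |V\<^sub>j| v\<^sub>j = 0\<close>.\<close>

lemma rat_in_Ints_if_Gcd_eq_1:
  fixes r :: rat and S :: "int set"
  assumes Gcd: "Gcd S = 1" and mult: "\<And>a. a \<in> S \<Longrightarrow> r * of_int a \<in> \<int>"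
  shows "r \<in> \<int>"
proof -
  obtain p d where qd: "quotient_of r = (p, d)" by force
  have d: "d > 0" using quotient_of_denom_pos[OF qd] .
  have cop: "coprime p d" using quotient_of_coprime[OF qd] .
  have r: "r = of_int p / of_int d" using quotient_of_div[OF qd] .
  have "d dvd a" if a: "a \<in> S" for a
  proof -
    from mult[OF a] obtain z where "r * of_int a = of_int z" by (auto elim: Ints_cases)
    then have "of_int (p * a) = (of_int (z * d) :: rat)" using d unfolding r
      by (simp add: field_simps)
    then have "d dvd p * a" by (metis of_int_eq_iff dvd_triv_right)
    then show ?thesis using cop by (metis coprime_commute coprime_dvd_mult_right_iff)
  qed
  then have "d dvd Gcd S" by (rule Gcd_greatest)
  then have "d = 1" using Gcd d by simp
  then show ?thesis unfolding r by simp
qed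

lemma dvd_det_if_dvd_col:
  fixes M :: "'a :: comm_ring_1 mat"
  assumes M: "M \<in> carrier_mat n n" and j: "j < n" and dvd: "\<And>i. i < n \<Longrightarrow> g dvd M $$ (i, j)"
  shows "g dvd det M"
  unfolding laplace_expansion_column[OF M j]
  by (intro dvd_sum dvd_mult2 dvd) simp

lemma minv:
  fixes A :: "rat mat"
  assumes A: "A \<in> carrier_mat n n" and det: "det A \<noteq> 0"
  shows "minv A \<in> carrier_mat n n" "A * minv A = 1\<^sub>m n" "minv A * A = 1\<^sub>m n"
proof -
  obtain B where B: "mat_inverse A = Some B"
    using mat_inverse(1)[OF A, of "()"] det_non_zero_imp_unit[OF A det, of "()"] by auto
  then have "minv A = B" unfolding minv_def by simp
  then show "minv A \<in> carrier_mat n n" "A * minv A = 1\<^sub>m n" "minv A * A = 1\<^sub>m n"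
    using mat_inverse(2)[OF A B] by auto
qed

lemma minv_eqI:
  fixes A X :: "rat mat"
  assumes A: "A \<in> carrier_mat n n" and X: "X \<in> carrier_mat n n" and AX: "A * X = 1\<^sub>m n"
  shows "minv A = X"
proof -
  have "det A * det X = 1" using arg_cong[OF AX, of det] det_mult[OF A X] by simp
  then have "det A \<noteq> 0" by auto
  note inv = minv[OF A this]
  have "minv A = minv A * (A * X)" using AX inv(1) by simp
  also have "\<dots> = (minv A * A) * X" using inv(1) A X by simp
  also have "\<dots> = X" using inv(3) X by simp
  finally show ?thesis .
qed

lemma det_ratm: "det (ratm A) = of_int (det A)"
  unfolding ratm_def by simp

lemma ratm_Adj:
  assumes W: "W \<in> carrier_mat n n" and det: "det W \<noteq> 0"
  shows "ratm (Adj W) = of_int (det W) \<cdot>\<^sub>m minv (ratm W)"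
proof -
  have Wr: "ratm W \<in> carrier_mat n n" and Ar: "ratm (Adj W) \<in> carrier_mat n n"
    using W adj_mat(1)[OF W] unfolding ratm_def Adj_def by auto
  have "det (ratm W) \<noteq> 0" using det by (simp add: det_ratm)
  note inv = minv[OF Wr this]
  have "ratm (Adj W) * ratm W = ratm (Adj W * W)"
    unfolding ratm_def Adj_def by (rule of_int_hom.mat_hom_mult[symmetric, OF adj_mat(1)[OF W] W])
  also have "\<dots> = of_int (det W) \<cdot>\<^sub>m 1\<^sub>m n"
    unfolding Adj_def adj_mat(3)[OF W] ratm_def by (rule eq_matI) auto
  finally have AW: "ratm (Adj W) * ratm W = of_int (det W) \<cdot>\<^sub>m 1\<^sub>m n" .
  have "ratm (Adj W) = ratm (Adj W) * (ratm W * minv (ratm W))" using inv(2) Ar by simp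
  also have "\<dots> = (ratm (Adj W) * ratm W) * minv (ratm W)" using Ar Wr inv(1) by simp
  also have "\<dots> = of_int (det W) \<cdot>\<^sub>m minv (ratm W)"
    unfolding AW using inv(1) by (subst mult_smult_assoc_mat[of _ n n _ n]) auto
  finally show ?thesis .
qed

lemma del_col_carrier: "V \<in> carrier_mat n (Suc n) \<Longrightarrow> del_col V j \<in> carrier_mat n n"
  unfolding del_col_def by auto

lemma V0_carrier: "V \<in> carrier_mat n (Suc n) \<Longrightarrow> V0 V \<in> carrier_mat n n"
  unfolding V0_def by (rule del_col_carrier)

lemma V0_nth: "V \<in> carrier_mat n (Suc n) \<Longrightarrow> i < n \<Longrightarrow> k < n \<Longrightarrow> V0 V $$ (i, k) = V $$ (i, Suc k)"
  unfolding V0_def del_col_def by auto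

lemma length_absdets: "length (absdets n V) = Suc n"
  unfolding absdets_def by simp

lemma nth_absdets: "j \<le> n \<Longrightarrow> absdets n V ! j = \<bar>Vdet V j\<bar>"
  unfolding absdets_def by (simp del: upt_Suc add: nth_map)

lemma Gcd_col_eq_1_if_reduced:
  assumes V: "V \<in> carrier_mat n (Suc n)" and red: "reduced (absdets n V)" and j: "j \<le> n"
  shows "Gcd {V $$ (k, j) | k. k < n} = 1"
proof -
  define g where "g = Gcd {V $$ (k, j) | k. k < n}"
  have "g dvd absdets n V ! l" if l: "l \<le> n" "l \<noteq> j" for l
  proof -
    define j' where "j' = (if j < l then j else j - 1)"
    have "j' < n" and col: "\<And>k. k < n \<Longrightarrow> del_col V l $$ (k, j') = V $$ (k, j)"
      using V j l by (auto simp: j'_def del_col_def)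
    have "g dvd det (del_col V l)"
      by (rule dvd_det_if_dvd_col[OF del_col_carrier[OF V] \<open>j' < n\<close>])
        (auto simp: col g_def intro: Gcd_dvd)
    then show ?thesis using l by (simp add: nth_absdets Vdet_def)
  qed
  then have "g dvd Gcd {absdets n V ! l | l. l < length (absdets n V) \<and> l \<noteq> j}"
    by (intro Gcd_greatest) (auto simp: length_absdets)
  also have "\<dots> = 1" using red j unfolding reduced_def length_absdets by simp
  finally show ?thesis unfolding g_def by simp
qed

lemma Gcd_tl_eq_1_if_reduced:
  assumes "reduced Q" and "length Q = Suc n"
  shows "Gcd {Q ! Suc i | i. i < n} = 1"
proof -
  have "{Q ! m | m. m < length Q \<and> m \<noteq> 0} = {Q ! Suc i | i. i < n}"
    using assms(2) by (auto, metis Suc_less_SucD gr0_conv_Suc)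
  then show ?thesis using assms unfolding reduced_def by auto
qed

locale associated_triple =
  fixes n :: nat and Q :: "int list" and W V :: "int mat"
  assumes assoc: "associated n Q W V"
begin

lemma F_admissible: "F_admissible n V"
  and Q_eq: "Q = absdets n V"
  and ratm_W_eq: "ratm W = wtrans Q (ratm (V0 V))"
  using assoc unfolding associated_def by auto

lemma V_carrier: "V \<in> carrier_mat n (Suc n)"
  using F_admissible unfolding F_admissible_def by simp

lemma ratm_V0_carrier: "ratm (V0 V) \<in> carrier_mat n n"
  using V0_carrier[OF V_carrier] unfolding ratm_def by simp

lemma length_Q: "length Q = Suc n"
  unfolding Q_eq length_absdets ..

lemma nth_Q: "j \<le> n \<Longrightarrow> Q ! j = \<bar>Vdet V j\<bar>"
  unfolding Q_eq by (rule nth_absdets)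

lemma nth_Q_pos: "j \<le> n \<Longrightarrow> Q ! j > 0"
  using F_admissible nth_Q unfolding F_admissible_def by auto

lemma Lcm_Q_pos: "Lcm (set Q) > 0"
proof -
  have "0 \<notin> set Q"
    using nth_Q_pos length_Q by (fastforce simp: in_set_conv_nth less_Suc_eq_le)
  then have "Lcm (set Q) \<noteq> 0" by (simp add: Lcm_0_iff)
  moreover have "Lcm (set Q) \<ge> 0" by simp
  ultimately show ?thesis by linarith
qed

lemma det_ratm_V0: "det (ratm (V0 V)) = of_int (Vdet V 0)"
  unfolding det_ratm V0_def Vdet_def ..

lemma det_ratm_V0_nonzero: "det (ratm (V0 V)) \<noteq> 0"
  using F_admissible unfolding det_ratm_V0 F_admissible_def by simp

lemma nth_Q_Suc_nonzero [simp]: "i < n \<Longrightarrow> Q ! Suc i \<noteq> 0"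
  using nth_Q_pos[of "Suc i"] by simp

lemma diag_Lcm_inverse:
  "mat_diag n (\<lambda>i. of_int (Lcm (set Q)) / rat_of_int (Q ! Suc i))
     * mat_diag n (\<lambda>i. of_int (Q ! Suc i) / of_int (Lcm (set Q))) = 1\<^sub>m n"
  using Lcm_Q_pos unfolding mat_diag_diag by (intro eq_matI) (auto simp: mat_diag_def)

definition W_inv :: "rat mat" where
  "W_inv = mat_diag n (\<lambda>i. of_int (Q ! Suc i) / of_int (Lcm (set Q))) * transpose_mat (ratm (V0 V))"

lemma W_inv_carrier: "W_inv \<in> carrier_mat n n"
  unfolding W_inv_def using ratm_V0_carrier by (intro mult_carrier_mat[of _ n n]) auto

lemma ratm_W_carrier: "ratm W \<in> carrier_mat n n"
  using ratm_W_eq ratm_V0_carrier minv[OF ratm_V0_carrier det_ratm_V0_nonzero]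
  unfolding wtrans_def mstar_def by simp

lemma W_carrier: "W \<in> carrier_mat n n"
  using ratm_W_carrier unfolding ratm_def by simp

lemma W_inverse: "ratm W * W_inv = 1\<^sub>m n"
proof -
  let ?A = "ratm (V0 V)" and ?E = "mat_diag n (\<lambda>i. of_int (Lcm (set Q)) / rat_of_int (Q ! Suc i))"
  note A = ratm_V0_carrier and inv = minv[OF ratm_V0_carrier det_ratm_V0_nonzero]
  have "of_int (Lcm (set Q)) \<cdot>\<^sub>m mat_diag n (\<lambda>i. 1 / rat_of_int (Q ! Suc i)) = ?E"
    by (rule eq_matI) (auto simp: mat_diag_def)
  then have W: "ratm W = transpose_mat (minv ?A) * ?E"
    unfolding ratm_W_eq wtrans_def mstar_def using A by simp
  have "?E * W_inv = transpose_mat ?A"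
    unfolding W_inv_def using A diag_Lcm_inverse
    by (subst assoc_mult_mat[symmetric, of _ n n _ n _ n]) auto
  then have "ratm W * W_inv = transpose_mat (minv ?A) * transpose_mat ?A"
    unfolding W using inv(1) W_inv_carrier by (subst assoc_mult_mat[of _ n n _ n _ n]) auto
  also have "\<dots> = transpose_mat (?A * minv ?A)" using transpose_mult[OF A inv(1)] by simp
  finally show ?thesis using inv(2) by simp
qed

lemma minv_W: "minv (ratm W) = W_inv"
  by (rule minv_eqI[OF ratm_W_carrier W_inv_carrier W_inverse])

lemma det_W_nonzero: "det W \<noteq> 0"
proof -
  have "det (ratm W) * det W_inv = 1"
    using arg_cong[OF W_inverse, of det] det_mult[OF ratm_W_carrier W_inv_carrier] by simp
  then show ?thesis unfolding det_ratm by auto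
qed

lemma Adj_W_nth_rat:
  assumes "i < n" and "k < n"
  shows "rat_of_int (Adj W $$ (i, k))
    = of_int (det W) / of_int (Lcm (set Q)) * of_int (Q ! Suc i) * of_int (V $$ (k, Suc i))"
proof -
  have "rat_of_int (Adj W $$ (i, k)) = ratm (Adj W) $$ (i, k)"
    using assms adj_mat(1)[OF W_carrier] unfolding ratm_def Adj_def by simp
  also have "\<dots> = (of_int (det W) \<cdot>\<^sub>m W_inv) $$ (i, k)"
    unfolding ratm_Adj[OF W_carrier det_W_nonzero] minv_W ..
  also have "\<dots> = of_int (det W) * W_inv $$ (i, k)"
    using assms W_inv_carrier by simp
  also have "W_inv $$ (i, k) = of_int (Q ! Suc i) / of_int (Lcm (set Q)) * of_int (V $$ (k, Suc i))"
    using assms V0_carrier[OF V_carrier] unfolding W_inv_def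
    by (simp add: mat_diag_mult_left[of _ n n] ratm_def V0_nth[OF V_carrier])
  finally show ?thesis by (simp add: field_simps)
qed

end

locale reduced_associated_triple = associated_triple +
  assumes reduced: "reduced Q"
begin

definition adj_factor :: int where
  "adj_factor = det W div Lcm (set Q)"

lemma Lcm_Q_dvd_det_W: "Lcm (set Q) dvd det W"
proof -
  define c where "c = rat_of_int (det W) / of_int (Lcm (set Q))"
  have "c * of_int (Q ! Suc i) \<in> \<int>" if i: "i < n" for i
  proof (rule rat_in_Ints_if_Gcd_eq_1)
    show "Gcd {V $$ (k, Suc i) | k. k < n} = 1"
      using Gcd_col_eq_1_if_reduced[OF V_carrier _ Suc_leI[OF i]] reduced unfolding Q_eq .
    show "c * of_int (Q ! Suc i) * of_int a \<in> \<int>" if "a \<in> {V $$ (k, Suc i) | k. k < n}" for a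
    proof -
      from that obtain k where k: "k < n" and a: "a = V $$ (k, Suc i)" by blast
      show ?thesis unfolding a c_def Adj_W_nth_rat[OF i k, symmetric] by (rule Ints_of_int)
    qed
  qed
  then have "c \<in> \<int>"
    using rat_in_Ints_if_Gcd_eq_1[OF Gcd_tl_eq_1_if_reduced[OF reduced length_Q]] by blast
  then obtain m where "c = of_int m" by (auto elim: Ints_cases)
  then have "rat_of_int (det W) = of_int (m * Lcm (set Q))"
    using Lcm_Q_pos unfolding c_def by (simp add: field_simps)
  then have "det W = m * Lcm (set Q)" by (simp only: of_int_eq_iff)
  then show ?thesis by simp
qed

lemma det_W_eq: "det W = adj_factor * Lcm (set Q)"
  using Lcm_Q_dvd_det_W unfolding adj_factor_def by simp

lemma adj_factor_nonzero: "adj_factor \<noteq> 0"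
  using det_W_nonzero det_W_eq by auto

lemma Adj_W_nth:
  assumes "i < n" and "k < n"
  shows "Adj W $$ (i, k) = adj_factor * (Q ! Suc i * V $$ (k, Suc i))"
proof -
  have "rat_of_int (Adj W $$ (i, k)) = of_int (adj_factor * (Q ! Suc i * V $$ (k, Suc i)))"
    using Adj_W_nth_rat[OF assms] Lcm_Q_pos unfolding det_W_eq by simp
  then show ?thesis by (simp only: of_int_eq_iff)
qed

lemma row_gcd_W: "i < n \<Longrightarrow> row_gcd W i = \<bar>adj_factor\<bar> * Q ! Suc i"
proof -
  assume i: "i < n"
  have "{Adj W $$ (i, k) | k. k < dim_col W} = (*) (adj_factor * Q ! Suc i) ` {V $$ (k, Suc i) | k. k < n}"
    using W_carrier Adj_W_nth[OF i] by (auto simp: mult.assoc; metis)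
  then have "row_gcd W i = Gcd ((*) (adj_factor * Q ! Suc i) ` {V $$ (k, Suc i) | k. k < n})"
    unfolding row_gcd_def by simp
  also have "\<dots> = normalize (adj_factor * Q ! Suc i * Gcd {V $$ (k, Suc i) | k. k < n})"
    by (rule Gcd_mult)
  also have "Gcd {V $$ (k, Suc i) | k. k < n} = 1"
    using Gcd_col_eq_1_if_reduced V_carrier reduced i unfolding Q_eq by simp
  finally show ?thesis using nth_Q_pos[of "Suc i"] i by (simp add: abs_mult)
qed

lemma Gcd_Adj_W: "Gcd {Adj W $$ (i, k) | i k. i < n \<and> k < n} = \<bar>adj_factor\<bar>"
proof -
  define T where "T = {Q ! Suc i * V $$ (k, Suc i) | i k. i < n \<and> k < n}"
  have "Gcd T dvd Q ! Suc i" if i: "i < n" for i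
  proof -
    have "Gcd T dvd Gcd ((*) (Q ! Suc i) ` {V $$ (k, Suc i) | k. k < n})"
      using i by (intro Gcd_greatest Gcd_dvd) (auto simp: T_def)
    also have "\<dots> = Q ! Suc i"
      using Gcd_col_eq_1_if_reduced V_carrier reduced i nth_Q_pos[of "Suc i"]
      unfolding Gcd_mult Q_eq by simp
    finally show ?thesis .
  qed
  then have "Gcd T dvd Gcd {Q ! Suc i | i. i < n}" by (intro Gcd_greatest) auto
  then have "Gcd T = 1" unfolding Gcd_tl_eq_1_if_reduced[OF reduced length_Q] by simp
  have "{Adj W $$ (i, k) | i k. i < n \<and> k < n} = (*) adj_factor ` T"
    unfolding T_def using Adj_W_nth by (auto; metis)
  then show ?thesis using Gcd_mult[of adj_factor T] \<open>Gcd T = 1\<close> by simp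
qed

lemma What_W: "What W = transpose_mat (ratm (V0 V))"
proof -
  have "mat_diag n (\<lambda>i. of_int \<bar>det W\<bar> / of_int (row_gcd W i))
      = mat_diag n (\<lambda>i. of_int (Lcm (set Q)) / rat_of_int (Q ! Suc i))"
    using Lcm_Q_pos adj_factor_nonzero
    by (intro eq_matI) (auto simp: mat_diag_def row_gcd_W det_W_eq abs_mult)
  then show ?thesis
    unfolding What_def minv_W W_inv_def using W_carrier ratm_V0_carrier diag_Lcm_inverse
    by (subst assoc_mult_mat[symmetric, of _ n n _ n _ n]) auto
qed

lemma weights_from_W:
  "rat_of_int (Q ! 0) = \<bar>det (What W)\<bar>"
  "i < n \<Longrightarrow> rat_of_int (Q ! Suc i)
     = of_int (row_gcd W i) / of_int (Gcd {Adj W $$ (i, k) | i k. i < n \<and> k < n})"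
  "rat_of_int (Lcm (set Q))
     = of_int \<bar>det W\<bar> / of_int (Gcd {Adj W $$ (i, k) | i k. i < n \<and> k < n})"
  using adj_factor_nonzero Lcm_Q_pos
  by (simp_all add: What_W det_transpose[OF ratm_V0_carrier] det_ratm_V0 nth_Q
                    row_gcd_W Gcd_Adj_W det_W_eq abs_mult)

end

lemma associated_weights_unique:
  assumes "associated n Q1 W V1" "reduced Q1" "associated n Q2 W V2" "reduced Q2"
  shows "Q1 = Q2"
proof -
  interpret Q1: reduced_associated_triple n Q1 W V1 using assms by unfold_locales
  interpret Q2: reduced_associated_triple n Q2 W V2 using assms by unfold_locales
  show ?thesis
  proof (rule nth_equalityI)
    show "length Q1 = length Q2" using Q1.length_Q Q2.length_Q by simp
    show "Q1 ! j = Q2 ! j" if "j < length Q1" for j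
    proof -
      have "rat_of_int (Q1 ! j) = rat_of_int (Q2 ! j)"
        using that Q1.length_Q Q1.weights_from_W Q2.weights_from_W by (cases j) auto
      then show ?thesis by simp
    qed
  qed
qed

lemma F_admissible_eqI:
  assumes F: "F_admissible n V" and F': "F_admissible n V'"
    and dets: "absdets n V' = absdets n V" and V0: "V0 V' = V0 V"
  shows "V' = V"
proof -
  have V: "V \<in> carrier_mat n (Suc n)" and V': "V' \<in> carrier_mat n (Suc n)"
    using F F' unfolding F_admissible_def by auto
  have tail: "V' $$ (i, Suc k) = V $$ (i, Suc k)" if "i < n" "k < n" for i k
    using V0_nth[OF V that] V0_nth[OF V' that] V0 by simp
  have abs_eq: "\<bar>Vdet V' j\<bar> = \<bar>Vdet V j\<bar>" if "j \<le> n" for j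
    using dets nth_absdets[OF that] by metis
  have col0: "\<bar>Vdet U 0\<bar> * U $$ (i, 0) = - (\<Sum>k<n. \<bar>Vdet U (Suc k)\<bar> * U $$ (i, Suc k))"
    if "F_admissible n U" "i < n" for U i
  proof -
    have "(\<Sum>j<Suc n. \<bar>Vdet U j\<bar> * U $$ (i, j)) = 0"
      using that unfolding F_admissible_def lessThan_Suc_atMost by auto
    then show ?thesis unfolding sum.lessThan_Suc_shift by linarith
  qed
  show ?thesis
  proof (rule eq_matI)
    fix i j assume "i < dim_row V" "j < dim_col V"
    then have i: "i < n" and j: "j \<le> n" using V by auto
    show "V' $$ (i, j) = V $$ (i, j)"
    proof (cases j)
      case 0
      have "\<bar>Vdet V 0\<bar> * V' $$ (i, 0) = \<bar>Vdet V 0\<bar> * V $$ (i, 0)"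
        using col0[OF F i] col0[OF F' i] abs_eq tail[OF i] by simp
      then show ?thesis using F 0 unfolding F_admissible_def by simp
    next
      case (Suc k)
      then show ?thesis using tail[OF i] j by simp
    qed
  qed (use V V' in auto)
qed

lemma associated_unique:
  assumes "associated n Q W V" "associated n Q W V'" "reduced Q"
  shows "V' = V"
proof -
  interpret V: reduced_associated_triple n Q W V using assms by unfold_locales
  interpret V': reduced_associated_triple n Q W V' using assms by unfold_locales
  have "ratm (V0 V') = ratm (V0 V)"
    using V.What_W V'.What_W by (metis transpose_transpose)
  then have "V0 V' = V0 V"
    unfolding ratm_def by (metis of_int_hom.mat_hom_inj)
  then show ?thesis
    using F_admissible_eqI V.F_admissible V'.F_admissible V.Q_eq V'.Q_eq by metis
qed

theorem mainTheorem9: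
  fixes n :: nat and W :: "int mat" and Q :: "int list"
  assumes "P_admissible n W"
    and "weights_vector Q" and "reduced Q"
    and "\<exists>V. associated n Q W V"
  shows "(wtrans Q (transpose_mat (What W)) = ratm W)
    \<and> (let s = Gcd {Adj W $$ (i, k) | i k. i < n \<and> k < n} in
           rat_of_int (Q ! 0) = \<bar>det (What W)\<bar>
         \<and> (\<forall>i<n. rat_of_int (Q ! Suc i) = rat_of_int (row_gcd W i) / rat_of_int s)
         \<and> rat_of_int (Lcm (set Q)) = rat_of_int \<bar>det W\<bar> / rat_of_int s)
    \<and> (\<forall>Q1 Q2. weights_vector Q1 \<and> reduced Q1 \<and> (\<exists>V. associated n Q1 W V)
              \<and> weights_vector Q2 \<and> reduced Q2 \<and> (\<exists>V. associated n Q2 W V) \<longrightarrow> Q1 = Q2)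
    \<and> (\<exists>!V. associated n Q W V)"
proof -
  \<comment> \<open>\<open>P_admissible n W\<close> and \<open>weights_vector Q\<close> are implied by the association and not needed.\<close>
  from assms(4) obtain V where assoc: "associated n Q W V" ..
  interpret reduced_associated_triple n Q W V using assoc assms(3) by unfold_locales
  have "wtrans Q (transpose_mat (What W)) = ratm W"
    using What_W ratm_W_eq by simp
  moreover have "\<exists>!V. associated n Q W V"
    using assoc associated_unique[OF _ _ assms(3)] by blast
  ultimately show ?thesis
    unfolding Let_def using weights_from_W associated_weights_unique by blast
qed

end
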